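(* Let $d\in\mathbb{N}$. A probability distribution of an $\mathbb{N}^d$-valued random vector $(\tau_1,\ldots,\tau_d)$ satisfies the local discrete multivariate lack-of-memory property, i.e. for every $k\in\{1,\ldots,d\}$, all $1\le i_1,\ldots,i_k\le d$ and all $m,n_{i_1},\ldots,n_{i_k}\in\mathbb{N}_0$, $$\mathbb{P}(\tau_{i_1}>n_{i_1}+m,\ldots,\tau_{i_k}>n_{i_k}+m\mid \tau_{i_1}>m,\ldots,\tau_{i_k}>m)=\mathbb{P}(\tau_{i_1}>n_{i_1},\ldots,\tau_{i_k}>n_{i_k}),$$ if and only if it is a $d$-variate wide-sense geometric law $\mathcal{G}^{\mathcal W}(\tilde{\mathbf p})$ for some admissible parameters $\tilde{\mathbf p}$. In that case one can take $\tilde p_I=\mathbb{P}(\{\tau_i>1\ \forall i\notin I\}\cap\{\tau_i=1\ \forall i\in I\})$, $I\subseteq\{1,\ldots,d\}$.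
   Context: $\mathbb{N}=\{1,2,\ldots\}$, $\mathbb{N}_0=\{0\}\cup\mathbb{N}$. Wide-sense geometric law $\mathcal{G}^{\mathcal W}(\tilde{\mathbf p})$: given parameters $\tilde p_I\in[0,1]$, $I\subseteq\{1,\ldots,d\}$ (including $I=\emptyset$), with $\sum_I\tilde p_I=1$ and $\sum_{I:k\notin I}\tilde p_I<1$ for each $k=1,\ldots,d$, run i.i.d. trials of an experiment whose outcome is the set $I$ with probability $\tilde p_I$; let $\tilde E_I$ be the index of the first trial with outcome $I$, and set $\tau_k:=\min\{\tilde E_I: k\in I\}$; the law of $(\tau_1,\ldots,\tau_d)$ is $\mathcal{G}^{\mathcal W}(\tilde{\mathbf p})$. *)

theory Defs
  imports "HOL-Probability.Probability" "HOL-Probability.Stream_Space"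
begin

text \<open>Random vectors in N^d are encoded as functions t :: nat => nat, where
  t i is the i-th coordinate for i in {1..d} and t i = 0 outside {1..d}.\<close>

definition local_lmp :: "nat \<Rightarrow> (nat \<Rightarrow> nat) pmf \<Rightarrow> bool" where
  "local_lmp d P \<longleftrightarrow>
     (\<forall>k \<in> {1..d}. \<forall>i :: nat \<Rightarrow> nat. \<forall>n :: nat \<Rightarrow> nat. \<forall>m :: nat.
        (\<forall>j \<in> {1..k}. i j \<in> {1..d}) \<longrightarrow>
        (let B = {t. \<forall>j \<in> {1..k}. t (i j) > m};
             A = {t. \<forall>j \<in> {1..k}. t (i j) > n j + m};
             A0 = {t. \<forall>j \<in> {1..k}. t (i j) > n j}
         in measure_pmf.prob P B > 0 \<longrightarrow>
            measure_pmf.prob P (A \<inter> B) / measure_pmf.prob P B = measure_pmf.prob P A0))"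

definition wsg_admissible :: "nat \<Rightarrow> (nat set \<Rightarrow> real) \<Rightarrow> bool" where
  "wsg_admissible d p \<longleftrightarrow>
     (\<forall>I \<in> Pow {1..d}. 0 \<le> p I \<and> p I \<le> 1) \<and>
     (\<Sum>I \<in> Pow {1..d}. p I) = 1 \<and>
     (\<forall>k \<in> {1..d}. (\<Sum>I \<in> {I \<in> Pow {1..d}. k \<notin> I}. p I) < 1)"

definition trial_pmf :: "nat \<Rightarrow> (nat set \<Rightarrow> real) \<Rightarrow> nat set pmf" where
  "trial_pmf d p = embed_pmf (\<lambda>I. if I \<subseteq> {1..d} then p I else 0)"

text \<open>Index (starting from 1) of the first trial with outcome I; infinity if none.\<close>
definition first_trial :: "nat set stream \<Rightarrow> nat set \<Rightarrow> enat" where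
  "first_trial \<omega> I = (if \<exists>n. \<omega> !! n = I then enat (Suc (LEAST n. \<omega> !! n = I)) else \<infinity>)"

definition wsg_tau :: "nat \<Rightarrow> nat set stream \<Rightarrow> nat \<Rightarrow> enat" where
  "wsg_tau d \<omega> k = Min {first_trial \<omega> I | I. I \<subseteq> {1..d} \<and> k \<in> I}"

definition wsg_vec :: "nat \<Rightarrow> nat set stream \<Rightarrow> (nat \<Rightarrow> nat)" where
  "wsg_vec d \<omega> = (\<lambda>k. if k \<in> {1..d} then the_enat (wsg_tau d \<omega> k) else 0)"

definition wsg_law :: "nat \<Rightarrow> (nat set \<Rightarrow> real) \<Rightarrow> (nat \<Rightarrow> nat) measure" where
  "wsg_law d p = distr (stream_space (measure_pmf (trial_pmf d p))) (count_space UNIV) (wsg_vec d)"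

end

theory Submission
  imports Defs
begin

text \<open>
  Everything is read off joint survival probabilities. Under the wide-sense geometric law,
  \<open>\<tau>\<^sub>j > n\<^sub>j\<close> for all \<open>j\<close> means that every trial \<open>r\<close> avoids the coordinates \<open>j\<close> with
  \<open>n\<^sub>j > r\<close>; by independence the survival probability is a product over the trials of
  miss probabilities \<open>\<Sum>\<^bsub>I \<inter> K = {}\<^esub> p\<^sub>I\<close>, and lack of memory follows by splitting this
  product after the first \<open>m\<close> trials. Conversely, lack of memory with \<open>m = 1\<close> peels one unit
  off every positive threshold, so each survival probability factorises into the probabilities
  \<open>P(\<tau>\<^sub>x > 1 for x \<in> K)\<close>, which are exactly the miss probabilities for
  \<open>p\<^sub>I = P(\<tau> = 1 precisely on I)\<close>. Both laws then share their survival function, and a law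
  on \<open>\<nat>\<^sup>d\<close> is determined by it: by induction on the set of coordinates pinned to a value,
  the mass of any point is an alternating combination of orthant probabilities.
\<close>

lemma enat_eq_iff_less_enat: "v = w \<longleftrightarrow> (\<forall>c. enat c < v \<longleftrightarrow> enat c < w)"
  for v w :: enat
proof
  assume H: "\<forall>c. enat c < v \<longleftrightarrow> enat c < w"
  show "v = w"
  proof (rule linorder_cases[of v w])
    assume "v < w"
    then obtain c where "v = enat c"
      by (cases v) auto
    with H \<open>v < w\<close> show ?thesis
      by auto
  next
    assume "w < v"
    then obtain c where "w = enat c"
      by (cases w) auto
    with H \<open>w < v\<close> show ?thesis
      by auto
  qed
qed simp

lemma measurable_enat_count_space:
  fixes g :: "'a \<Rightarrow> enat"
  assumes [measurable]: "\<And>c. Measurable.pred M (\<lambda>\<omega>. enat c < g \<omega>)"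
  shows "g \<in> measurable M (count_space UNIV)"
proof (subst measurable_count_space_eq2_countable, safe)
  fix w
  have "g -` {w} \<inter> space M = {\<omega> \<in> space M. \<forall>c. enat c < g \<omega> \<longleftrightarrow> enat c < w}"
    by (auto simp: enat_eq_iff_less_enat[of _ w])
  also have "\<dots> \<in> sets M"
    by measurable
  finally show "g -` {w} \<inter> space M \<in> sets M" .
qed simp

lemma sets_stream_space_prefix:
  assumes "\<And>r. r < N \<Longrightarrow> A r \<in> sets M"
  shows "{\<omega> \<in> space (stream_space M). \<forall>r<N. \<omega> !! r \<in> A r} \<in> sets (stream_space M)"
proof -
  have "Measurable.pred (stream_space M) (\<lambda>\<omega>. \<omega> !! r \<in> A r)" if "r < N" for r
    using assms[OF that] by measurable
  then show ?thesis
    by (intro predE pred_intros_finite) auto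
qed

lemma (in prob_space) emeasure_stream_space_prefix:
  assumes "\<And>r. r < N \<Longrightarrow> A r \<in> sets M"
  shows "emeasure (stream_space M) {\<omega> \<in> space (stream_space M). \<forall>r<N. \<omega> !! r \<in> A r}
       = (\<Prod>r<N. emeasure M (A r))"
  using assms
proof (induction N arbitrary: A)
  case 0
  then show ?case
    using prob_space.emeasure_space_1[OF prob_space_stream_space] by simp
next
  case (Suc N)
  let ?S = "stream_space M"
  have "emeasure ?S {\<omega> \<in> space ?S. \<forall>r<Suc N. \<omega> !! r \<in> A r}
      = (\<integral>\<^sup>+t. emeasure ?S {\<omega> \<in> space ?S. t ## \<omega> \<in> {\<omega> \<in> space ?S. \<forall>r<Suc N. \<omega> !! r \<in> A r}} \<partial>M)"
    by (intro emeasure_stream_space sets_stream_space_prefix Suc.prems)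
  also have "\<dots> = (\<integral>\<^sup>+t. indicator (A 0) t * (\<Prod>r<N. emeasure M (A (Suc r))) \<partial>M)"
  proof (intro nn_integral_cong)
    fix t assume "t \<in> space M"
    then have "{\<omega> \<in> space ?S. t ## \<omega> \<in> {\<omega> \<in> space ?S. \<forall>r<Suc N. \<omega> !! r \<in> A r}}
        = (if t \<in> A 0 then {\<omega> \<in> space ?S. \<forall>r<N. \<omega> !! r \<in> A (Suc r)} else {})"
      by (auto simp: space_stream_space less_Suc_eq_0_disj)
    then show "emeasure ?S {\<omega> \<in> space ?S. t ## \<omega> \<in> {\<omega> \<in> space ?S. \<forall>r<Suc N. \<omega> !! r \<in> A r}}
        = indicator (A 0) t * (\<Prod>r<N. emeasure M (A (Suc r)))"
      using Suc.IH[of "\<lambda>r. A (Suc r)"] Suc.prems by (simp add: indicator_def)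
  qed
  also have "\<dots> = (\<Prod>r<Suc N. emeasure M (A r))"
    using Suc.prems by (simp add: nn_integral_multc prod.lessThan_Suc_shift del: prod.lessThan_Suc)
  finally show ?case .
qed

lemma (in prob_space) measure_stream_space_prefix:
  assumes "\<And>r. r < N \<Longrightarrow> A r \<in> sets M"
  shows "measure (stream_space M) {\<omega> \<in> space (stream_space M). \<forall>r<N. \<omega> !! r \<in> A r}
       = (\<Prod>r<N. prob (A r))"
proof -
  interpret S: prob_space "stream_space M" by (rule prob_space_stream_space)
  show ?thesis
    using emeasure_stream_space_prefix[OF assms]
    by (simp add: S.emeasure_eq_measure emeasure_eq_measure prod_ennreal prod_nonneg)
qed

subsection \<open>The wide-sense geometric law\<close>

definition miss_prob :: "nat \<Rightarrow> (nat set \<Rightarrow> real) \<Rightarrow> nat set \<Rightarrow> real" where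
  "miss_prob d p K = (\<Sum>I \<in> {I \<in> Pow {1..d}. I \<inter> K = {}}. p I)"

lemma miss_prob_singleton:
  assumes "wsg_admissible d p" and "k \<in> {1..d}"
  shows "0 \<le> miss_prob d p {k}" and "miss_prob d p {k} < 1"
proof -
  have "miss_prob d p {k} = (\<Sum>I \<in> {I \<in> Pow {1..d}. k \<notin> I}. p I)"
    unfolding miss_prob_def by (rule sum.cong) auto
  then show "miss_prob d p {k} < 1"
    using assms by (simp add: wsg_admissible_def)
  show "0 \<le> miss_prob d p {k}"
    using assms(1) by (auto simp: miss_prob_def wsg_admissible_def intro: sum_nonneg)
qed

lemma pmf_trial_pmf:
  assumes "wsg_admissible d p"
  shows "pmf (trial_pmf d p) I = (if I \<subseteq> {1..d} then p I else 0)"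
proof -
  let ?f = "\<lambda>I. if I \<subseteq> {1..d} then p I else 0"
  have nonneg: "0 \<le> ?f I" for I
    using assms by (auto simp: wsg_admissible_def)
  have "(\<integral>\<^sup>+I. ennreal (?f I) \<partial>count_space UNIV) = (\<Sum>I \<in> Pow {1..d}. ennreal (?f I))"
    by (rule nn_integral_count_space') auto
  also have "\<dots> = ennreal (\<Sum>I \<in> Pow {1..d}. ?f I)"
    by (rule sum_ennreal) (rule nonneg)
  also have "(\<Sum>I \<in> Pow {1..d}. ?f I) = 1"
    using assms by (simp add: wsg_admissible_def)
  finally show ?thesis
    unfolding trial_pmf_def using pmf_embed_pmf[of ?f, OF nonneg] by simp
qed

lemma prob_trial_pmf_miss:
  assumes "wsg_admissible d p"
  shows "measure_pmf.prob (trial_pmf d p) {I. I \<subseteq> {1..d} \<longrightarrow> I \<inter> K = {}} = miss_prob d p K"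
proof -
  let ?q = "trial_pmf d p"
  have "set_pmf ?q \<subseteq> Pow {1..d}"
    by (auto simp: set_pmf_eq pmf_trial_pmf[OF assms] split: if_splits)
  then have "measure_pmf.prob ?q {I. I \<subseteq> {1..d} \<longrightarrow> I \<inter> K = {}}
      = measure_pmf.prob ?q {I \<in> Pow {1..d}. I \<inter> K = {}}"
    by (intro measure_eq_AE AE_pmfI) auto
  also have "\<dots> = (\<Sum>I \<in> {I \<in> Pow {1..d}. I \<inter> K = {}}. pmf ?q I)"
    by (rule measure_measure_pmf_finite) auto
  also have "\<dots> = miss_prob d p K"
    unfolding miss_prob_def by (rule sum.cong) (auto simp: pmf_trial_pmf[OF assms])
  finally show ?thesis .
qed

lemma less_first_trial_iff: "enat c < first_trial \<omega> I \<longleftrightarrow> (\<forall>r<c. \<omega> !! r \<noteq> I)"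
proof (cases "\<exists>n. \<omega> !! n = I")
  case True
  define L where "L = (LEAST n. \<omega> !! n = I)"
  have hit: "\<omega> !! L = I"
    unfolding L_def by (rule LeastI_ex[OF True])
  have miss: "\<omega> !! r \<noteq> I" if "r < L" for r
    using that unfolding L_def by (rule not_less_Least)
  have "c \<le> L \<longleftrightarrow> (\<forall>r<c. \<omega> !! r \<noteq> I)"
    using hit miss leI order.strict_trans2 by blast
  then show ?thesis
    using True unfolding first_trial_def L_def[symmetric] by (simp add: less_Suc_eq_le)
qed (simp add: first_trial_def)

lemma less_wsg_tau_iff:
  assumes "k \<in> {1..d}"
  shows "enat c < wsg_tau d \<omega> k \<longleftrightarrow> (\<forall>r<c. \<omega> !! r \<subseteq> {1..d} \<longrightarrow> k \<notin> \<omega> !! r)"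
proof -
  let ?F = "{first_trial \<omega> I | I. I \<subseteq> {1..d} \<and> k \<in> I}"
  have "?F \<subseteq> first_trial \<omega> ` Pow {1..d}"
    by auto
  then have "finite ?F"
    by (rule finite_subset) simp
  moreover have "?F \<noteq> {}"
    using assms by auto
  ultimately have "enat c < wsg_tau d \<omega> k \<longleftrightarrow> (\<forall>I. I \<subseteq> {1..d} \<and> k \<in> I \<longrightarrow> enat c < first_trial \<omega> I)"
    unfolding wsg_tau_def by (subst Min_gr_iff) auto
  then show ?thesis
    by (auto simp: less_first_trial_iff)
qed

lemma sets_less_wsg_tau:
  assumes "k \<in> {1..d}"
  shows "{\<omega>. enat c < wsg_tau d \<omega> k} \<in> sets (stream_space (measure_pmf q))"
proof -
  have "{\<omega>. enat c < wsg_tau d \<omega> k}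
      = {\<omega> \<in> space (stream_space (measure_pmf q)). \<forall>r<c. \<omega> !! r \<in> {I. I \<subseteq> {1..d} \<longrightarrow> k \<notin> I}}"
    using less_wsg_tau_iff[OF assms] by (auto simp: space_stream_space)
  also have "\<dots> \<in> sets (stream_space (measure_pmf q))"
    by (rule sets_stream_space_prefix) simp
  finally show ?thesis .
qed

lemma measurable_wsg_tau:
  assumes "k \<in> {1..d}"
  shows "(\<lambda>\<omega>. wsg_tau d \<omega> k) \<in> measurable (stream_space (measure_pmf q)) (count_space UNIV)"
  using sets_less_wsg_tau[OF assms]
  by (intro measurable_enat_count_space) (simp add: pred_def space_stream_space)

definition nat_vectors :: "nat \<Rightarrow> (nat \<Rightarrow> nat) set" where
  "nat_vectors d = {t. \<forall>i. i \<notin> {1..d} \<longrightarrow> t i = 0}"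

definition pos_vectors :: "nat \<Rightarrow> (nat \<Rightarrow> nat) set" where
  "pos_vectors d = {t \<in> nat_vectors d. \<forall>i \<in> {1..d}. 1 \<le> t i}"

lemma countable_nat_vectors: "countable (nat_vectors d)"
proof -
  let ?vec = "\<lambda>(xs :: nat list) i. if i \<in> {1..d} then xs ! (i - 1) else 0"
  have "t = ?vec (map t [1..<d + 1])" if "t \<in> nat_vectors d" for t
    using that by (auto simp: nat_vectors_def nth_map fun_eq_iff simp del: upt_Suc)
  then have "nat_vectors d \<subseteq> range ?vec"
    by blast
  then show ?thesis
    by (rule countable_subset) simp
qed

lemma measurable_wsg_vec:
  "wsg_vec d \<in> measurable (stream_space (measure_pmf q)) (count_space UNIV)"
proof -
  let ?S = "stream_space (measure_pmf q)"
  have "wsg_vec d \<in> measurable ?S (count_space (nat_vectors d))"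
  proof (subst measurable_count_space_eq_countable[OF countable_nat_vectors], safe)
    fix \<omega> show "wsg_vec d \<omega> \<in> nat_vectors d"
      by (simp add: wsg_vec_def nat_vectors_def)
  next
    fix t assume "t \<in> nat_vectors d"
    then have "wsg_vec d -` {t} \<inter> space ?S
        = {\<omega> \<in> space ?S. \<forall>k \<in> {1..d}. the_enat (wsg_tau d \<omega> k) = t k}"
      by (auto simp: wsg_vec_def nat_vectors_def fun_eq_iff)
    also have "\<dots> \<in> sets ?S"
      by (intro predE pred_intros_finite measurable_compose[OF measurable_wsg_tau measurable_count_space]) auto
    finally show "wsg_vec d -` {t} \<inter> space ?S \<in> sets ?S" .
  qed
  then show ?thesis
    by (rule measurable_compose[OF _ measurable_count_space[of "\<lambda>t. t"]])
qed

lemma wsg_tau_survival_event: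
  assumes "\<forall>j \<in> J. i j \<in> {1..d}" and "\<forall>j \<in> J. n j \<le> N"
  shows "{\<omega>. \<forall>j \<in> J. enat (n j) < wsg_tau d \<omega> (i j)}
       = {\<omega> \<in> space (stream_space (measure_pmf q)). \<forall>r<N.
            \<omega> !! r \<in> {I. I \<subseteq> {1..d} \<longrightarrow> I \<inter> {i j |j. j \<in> J \<and> r < n j} = {}}}"
  using assms by (auto simp: less_wsg_tau_iff space_stream_space) (use order.strict_trans2 in blast)

lemma prob_wsg_tau_survival:
  assumes adm: "wsg_admissible d p" and i: "\<forall>j \<in> J. i j \<in> {1..d}" and n: "\<forall>j \<in> J. n j \<le> N"
  shows "measure (stream_space (measure_pmf (trial_pmf d p)))
           {\<omega>. \<forall>j \<in> J. enat (n j) < wsg_tau d \<omega> (i j)}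
       = (\<Prod>r<N. miss_prob d p {i j |j. j \<in> J \<and> r < n j})"
  unfolding wsg_tau_survival_event[OF i n, where q = "trial_pmf d p"]
  by (subst measure_pmf.measure_stream_space_prefix, simp)
    (rule prod.cong[OF refl prob_trial_pmf_miss[OF adm]])

lemma AE_wsg_tau_eq_wsg_vec:
  assumes adm: "wsg_admissible d p"
  shows "AE \<omega> in stream_space (measure_pmf (trial_pmf d p)).
           \<forall>k \<in> {1..d}. wsg_tau d \<omega> k = enat (wsg_vec d \<omega> k)"
proof (rule AE_finite_allI)
  fix k assume k: "k \<in> {1..d}"
  let ?S = "stream_space (measure_pmf (trial_pmf d p))"
  let ?a = "miss_prob d p {k}"
  interpret S: prob_space ?S
    by (rule prob_space.prob_space_stream_space[OF measure_pmf.prob_space_axioms])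
  let ?never = "{\<omega> \<in> space ?S. wsg_tau d \<omega> k = \<infinity>}"
  have never_sets: "?never \<in> sets ?S"
    using measurable_sets[OF measurable_wsg_tau[OF k], of "{\<infinity>}"] by (simp add: vimage_def Int_def conj_commute)
  have "(\<lambda>c. ?a ^ c) \<longlonglongrightarrow> 0"
    using miss_prob_singleton[OF adm k] by (intro LIMSEQ_power_zero) simp
  moreover have "S.prob ?never \<le> ?a ^ c" for c
  proof -
    have "S.prob ?never \<le> S.prob {\<omega>. \<forall>j \<in> {k}. enat c < wsg_tau d \<omega> j}"
      using sets_less_wsg_tau[OF k] by (intro S.finite_measure_mono) auto
    also have "\<dots> = (\<Prod>r<c. miss_prob d p {j |j. j \<in> {k} \<and> r < c})"
      using prob_wsg_tau_survival[OF adm, of "{k}" "\<lambda>j. j" "\<lambda>_. c" c] k by simp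
    also have "\<dots> = ?a ^ c"
      by simp
    finally show ?thesis .
  qed
  ultimately have "S.prob ?never = 0"
    by (intro antisym LIMSEQ_le_const) auto
  then have "AE \<omega> in ?S. wsg_tau d \<omega> k \<noteq> \<infinity>"
    by (subst AE_iff_measurable[OF never_sets]) (auto simp: S.emeasure_eq_measure)
  then show "AE \<omega> in ?S. wsg_tau d \<omega> k = enat (wsg_vec d \<omega> k)"
    by eventually_elim (use k in \<open>auto simp: wsg_vec_def\<close>)
qed simp

lemma prob_space_wsg_law: "prob_space (wsg_law d p)"
  unfolding wsg_law_def
  by (rule prob_space.prob_space_distr[OF
        prob_space.prob_space_stream_space[OF measure_pmf.prob_space_axioms] measurable_wsg_vec])

lemma sets_wsg_law [simp]: "sets (wsg_law d p) = UNIV"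
  by (simp add: wsg_law_def)

lemma wsg_law_survival:
  assumes adm: "wsg_admissible d p" and i: "\<forall>j \<in> J. i j \<in> {1..d}" and n: "\<forall>j \<in> J. n j \<le> N"
  shows "measure (wsg_law d p) {t. \<forall>j \<in> J. n j < t (i j)}
       = (\<Prod>r<N. miss_prob d p {i j |j. j \<in> J \<and> r < n j})"
proof -
  let ?S = "stream_space (measure_pmf (trial_pmf d p))"
  let ?T = "{t. \<forall>j \<in> J. n j < t (i j)}"
  have "measure (wsg_law d p) ?T = measure ?S (wsg_vec d -` ?T \<inter> space ?S)"
    unfolding wsg_law_def by (rule measure_distr[OF measurable_wsg_vec]) simp
  also have "\<dots> = measure ?S {\<omega>. \<forall>j \<in> J. enat (n j) < wsg_tau d \<omega> (i j)}"
  proof (rule measure_eq_AE)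
    show "AE \<omega> in ?S. \<omega> \<in> wsg_vec d -` ?T \<inter> space ?S
                   \<longleftrightarrow> \<omega> \<in> {\<omega>. \<forall>j \<in> J. enat (n j) < wsg_tau d \<omega> (i j)}"
      using AE_wsg_tau_eq_wsg_vec[OF adm]
      by eventually_elim (use i in \<open>auto simp: space_stream_space\<close>)
    show "wsg_vec d -` ?T \<inter> space ?S \<in> sets ?S"
      by (rule measurable_sets[OF measurable_wsg_vec]) simp
    show "{\<omega>. \<forall>j \<in> J. enat (n j) < wsg_tau d \<omega> (i j)} \<in> sets ?S"
      unfolding wsg_tau_survival_event[OF i n, where q = "trial_pmf d p"]
      by (rule sets_stream_space_prefix) simp
  qed
  also have "\<dots> = (\<Prod>r<N. miss_prob d p {i j |j. j \<in> J \<and> r < n j})"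
    by (rule prob_wsg_tau_survival[OF adm i n])
  finally show ?thesis .
qed

lemma AE_wsg_law_pos_vectors:
  assumes adm: "wsg_admissible d p"
  shows "AE t in wsg_law d p. t \<in> pos_vectors d"
  unfolding wsg_law_def
proof (subst AE_distr_iff[OF measurable_wsg_vec])
  show "AE \<omega> in stream_space (measure_pmf (trial_pmf d p)). wsg_vec d \<omega> \<in> pos_vectors d"
    using AE_wsg_tau_eq_wsg_vec[OF adm]
  proof eventually_elim
    case (elim \<omega>)
    have "1 \<le> wsg_vec d \<omega> k" if "k \<in> {1..d}" for k
      using elim that less_wsg_tau_iff[OF that, of 0 \<omega>] by (auto simp: Suc_le_eq)
    then show ?case
      by (auto simp: pos_vectors_def nat_vectors_def wsg_vec_def)
  qed
qed simp

lemma local_lmp_wsg_law: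
  assumes adm: "wsg_admissible d p" and law: "measure_pmf P = wsg_law d p"
  shows "local_lmp d P"
  unfolding local_lmp_def Let_def
proof (intro ballI allI impI)
  fix k m :: nat and i n :: "nat \<Rightarrow> nat"
  assume i: "\<forall>j \<in> {1..k}. i j \<in> {1..d}"
  let ?J = "{1..k}"
  let ?N = "\<Sum>j \<in> ?J. n j"
  let ?Q = "measure (wsg_law d p)"
  let ?miss = "\<lambda>n r. miss_prob d p {i j |j. j \<in> ?J \<and> r < n j}"
  have n_le: "\<forall>j \<in> ?J. n j \<le> ?N"
    by (auto intro: member_le_sum)
  have prod_split: "(\<Prod>r<m + N. f r) = (\<Prod>r<m. f r) * (\<Prod>r<N. f (m + r))" for N and f :: "nat \<Rightarrow> real"
    by (induction N) (simp_all add: mult.assoc)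
  have "?Q {t. \<forall>j \<in> ?J. n j + m < t (i j)} = (\<Prod>r<m + ?N. ?miss (\<lambda>j. n j + m) r)"
    using n_le by (intro wsg_law_survival[OF adm i]) auto
  also have "\<dots> = (\<Prod>r<m. ?miss (\<lambda>j. n j + m) r) * (\<Prod>r<?N. ?miss (\<lambda>j. n j + m) (m + r))"
    by (rule prod_split)
  also have "(\<Prod>r<m. ?miss (\<lambda>j. n j + m) r) = (\<Prod>r<m. ?miss (\<lambda>_. m) r)"
    by (intro prod.cong arg_cong[where f = "miss_prob d p"]) auto
  also have "\<dots> = ?Q {t. \<forall>j \<in> ?J. m < t (i j)}"
    by (intro wsg_law_survival[OF adm i, symmetric]) simp
  also have "(\<Prod>r<?N. ?miss (\<lambda>j. n j + m) (m + r)) = ?Q {t. \<forall>j \<in> ?J. n j < t (i j)}"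
    using wsg_law_survival[OF adm i n_le] by simp
  finally have "?Q {t. \<forall>j \<in> ?J. n j + m < t (i j)}
      = ?Q {t. \<forall>j \<in> ?J. m < t (i j)} * ?Q {t. \<forall>j \<in> ?J. n j < t (i j)}" .
  moreover assume "measure_pmf.prob P {t. \<forall>j \<in> ?J. m < t (i j)} > 0"
  moreover have "{t. \<forall>j \<in> ?J. n j + m < t (i j)} \<inter> {t. \<forall>j \<in> ?J. m < t (i j)}
      = {t. \<forall>j \<in> ?J. n j + m < t (i j)}"
    by auto
  ultimately show "measure_pmf.prob P ({t. \<forall>j \<in> ?J. n j + m < t (i j)} \<inter> {t. \<forall>j \<in> ?J. m < t (i j)})
      / measure_pmf.prob P {t. \<forall>j \<in> ?J. m < t (i j)} = measure_pmf.prob P {t. \<forall>j \<in> ?J. n j < t (i j)}"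
    by (simp add: law)
qed

subsection \<open>Lack of memory determines the law\<close>

lemma measure_pmf_eq_on_support:
  assumes "\<And>t. t \<in> set_pmf P \<Longrightarrow> t \<in> X \<longleftrightarrow> t \<in> Y"
  shows "measure_pmf.prob P X = measure_pmf.prob P Y"
  using assms by (intro measure_eq_AE AE_pmfI) auto

lemma local_lmp_prob_mult:
  assumes lmp: "local_lmp d P" and K: "K \<subseteq> {1..d}"
  shows "measure_pmf.prob P {t. \<forall>x \<in> K. n x + m < t x}
       = measure_pmf.prob P {t. \<forall>x \<in> K. m < t x} * measure_pmf.prob P {t. \<forall>x \<in> K. n x < t x}"
proof -
  let ?A = "{t. \<forall>x \<in> K. n x + m < t x}" and ?B = "{t. \<forall>x \<in> K. m < t x}"
    and ?C = "{t. \<forall>x \<in> K. n x < t x}"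
  have A_B: "?A \<inter> ?B = ?A"
    by auto
  show ?thesis
  proof (cases "K = {} \<or> measure_pmf.prob P ?B = 0")
    \<comment> \<open>\<open>local_lmp\<close> does not apply (it needs \<open>k \<ge> 1\<close> and a non-null conditioning event),
      but the identity is trivial.\<close>
    case True
    moreover have "measure_pmf.prob P ?A \<le> measure_pmf.prob P ?B"
      by (intro measure_pmf.finite_measure_mono) auto
    ultimately show ?thesis
      by (auto simp: measure_le_0_iff)
  next
    case False
    then have B_pos: "measure_pmf.prob P ?B > 0" and "K \<noteq> {}"
      by (auto simp: zero_less_measure_iff)
    have "finite K"
      using K finite_subset by blast
    define k where "k = card K"
    obtain h where "bij_betw h {1..k} K"
      using ex_bij_betw_nat_finite_1[OF \<open>finite K\<close>] unfolding k_def by blast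
    then have K_eq: "K = h ` {1..k}"
      by (simp add: bij_betw_def)
    have k: "k \<in> {1..d}"
      using K \<open>K \<noteq> {}\<close> \<open>finite K\<close> card_mono[of "{1..d}" K]
      by (auto simp: k_def Suc_le_eq card_gt_0_iff)
    have h_range: "h j \<in> {1..d}" if "j \<in> {1..k}" for j
      using K that unfolding K_eq by blast
    from lmp[unfolded local_lmp_def Let_def, rule_format, OF k h_range, where n = "\<lambda>j. n (h j)" and m = m]
    have "measure_pmf.prob P (?A \<inter> ?B) / measure_pmf.prob P ?B = measure_pmf.prob P ?C"
      using B_pos unfolding K_eq by simp
    then show ?thesis
      using B_pos unfolding A_B by (simp add: field_simps)
  qed
qed

definition surv_one :: "(nat \<Rightarrow> nat) pmf \<Rightarrow> nat set \<Rightarrow> real" where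
  "surv_one P K = measure_pmf.prob P {t. \<forall>x \<in> K. 1 < t x}"

lemma prob_orthant_eq_prod_surv_one:
  assumes lmp: "local_lmp d P" and supp: "set_pmf P \<subseteq> pos_vectors d"
    and c: "\<forall>x \<in> {1..d}. c x \<le> N"
  shows "measure_pmf.prob P {t. \<forall>x \<in> {1..d}. c x < t x} = (\<Prod>r<N. surv_one P {x \<in> {1..d}. r < c x})"
proof -
  have drop_zeros: "measure_pmf.prob P {t. \<forall>x \<in> {1..d}. g x < t x}
      = measure_pmf.prob P {t. \<forall>x \<in> L. g x < t x}"
    if L: "L \<subseteq> {1..d}" "\<forall>x \<in> {1..d} - L. g x = 0" for g L
  proof (rule measure_pmf_eq_on_support)
    fix t assume "t \<in> set_pmf P"
    then have "\<forall>x \<in> {1..d}. 0 < t x"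
      using supp by (auto simp: pos_vectors_def Suc_le_eq)
    then show "t \<in> {t. \<forall>x \<in> {1..d}. g x < t x} \<longleftrightarrow> t \<in> {t. \<forall>x \<in> L. g x < t x}"
      using L by auto
  qed
  show ?thesis
    using c
  proof (induction N arbitrary: c)
    case 0
    then show ?case
      using drop_zeros[of "{}" c] by simp
  next
    case (Suc N)
    let ?K = "{x \<in> {1..d}. 0 < c x}"
    have "measure_pmf.prob P {t. \<forall>x \<in> {1..d}. c x < t x} = measure_pmf.prob P {t. \<forall>x \<in> ?K. c x < t x}"
      by (rule drop_zeros) auto
    also have "{t. \<forall>x \<in> ?K. c x < t x} = {t. \<forall>x \<in> ?K. (c x - 1) + 1 < t x}"
      by auto
    also have "measure_pmf.prob P \<dots> = surv_one P ?K * measure_pmf.prob P {t. \<forall>x \<in> ?K. c x - 1 < t x}"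
      unfolding surv_one_def by (rule local_lmp_prob_mult[OF lmp]) auto
    also have "measure_pmf.prob P {t. \<forall>x \<in> ?K. c x - 1 < t x}
        = measure_pmf.prob P {t. \<forall>x \<in> {1..d}. c x - 1 < t x}"
      by (rule drop_zeros[symmetric]) auto
    also have "\<dots> = (\<Prod>r<N. surv_one P {x \<in> {1..d}. r < c x - 1})"
      using Suc.prems by (intro Suc.IH) auto
    also have "surv_one P ?K * \<dots> = (\<Prod>r<Suc N. surv_one P {x \<in> {1..d}. r < c x})"
      unfolding prod.lessThan_Suc_shift
      by (intro arg_cong2[where f = "(*)"] prod.cong arg_cong[where f = "surv_one P"]) auto
    finally show ?case .
  qed
qed

definition ones_exactly :: "nat \<Rightarrow> nat set \<Rightarrow> (nat \<Rightarrow> nat) set" where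
  "ones_exactly d I = {t. (\<forall>i \<in> {1..d} - I. t i > 1) \<and> (\<forall>i \<in> I. t i = 1)}"

lemma ones_exactly_unique:
  assumes t: "t \<in> ones_exactly d I" and I: "I \<subseteq> {1..d}"
  shows "I = {i \<in> {1..d}. t i = 1}"
proof (intro set_eqI iffI)
  fix i assume i: "i \<in> {i \<in> {1..d}. t i = 1}"
  show "i \<in> I"
  proof (rule ccontr)
    assume "i \<notin> I"
    with i t have "1 < t i"
      unfolding ones_exactly_def by blast
    with i show False
      by simp
  qed
next
  fix i assume "i \<in> I"
  with t I show "i \<in> {i \<in> {1..d}. t i = 1}"
    unfolding ones_exactly_def by blast
qed

lemma disjoint_family_on_ones_exactly: "disjoint_family_on (ones_exactly d) (Pow {1..d})"
  unfolding disjoint_family_on_def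
proof (intro ballI impI)
  fix I I' assume I: "I \<in> Pow {1..d}" and I': "I' \<in> Pow {1..d}" and "I \<noteq> I'"
  show "ones_exactly d I \<inter> ones_exactly d I' = {}"
  proof (rule equals0I)
    fix t assume t: "t \<in> ones_exactly d I \<inter> ones_exactly d I'"
    have "I = {i \<in> {1..d}. t i = 1}"
      using t I by (intro ones_exactly_unique) auto
    moreover have "I' = {i \<in> {1..d}. t i = 1}"
      using t I' by (intro ones_exactly_unique) auto
    ultimately show False
      using \<open>I \<noteq> I'\<close> by simp
  qed
qed

lemma surv_one_eq_miss_prob:
  assumes supp: "set_pmf P \<subseteq> pos_vectors d" and K: "K \<subseteq> {1..d}"
  shows "surv_one P K = miss_prob d (\<lambda>I. measure_pmf.prob P (ones_exactly d I)) K"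
proof -
  let ?S = "{I \<in> Pow {1..d}. I \<inter> K = {}}"
  have "disjoint_family_on (ones_exactly d) ?S"
    by (rule disjoint_family_on_mono[OF _ disjoint_family_on_ones_exactly]) auto
  then have "miss_prob d (\<lambda>I. measure_pmf.prob P (ones_exactly d I)) K
      = measure_pmf.prob P (\<Union>I \<in> ?S. ones_exactly d I)"
    unfolding miss_prob_def by (intro measure_pmf.finite_measure_finite_Union[symmetric]) auto
  also have "\<dots> = surv_one P K"
    unfolding surv_one_def
  proof (rule measure_pmf_eq_on_support)
    fix t assume "t \<in> set_pmf P"
    then have pos: "\<forall>i \<in> {1..d}. 1 \<le> t i"
      using supp by (auto simp: pos_vectors_def)
    show "t \<in> (\<Union>I \<in> ?S. ones_exactly d I) \<longleftrightarrow> t \<in> {t. \<forall>x \<in> K. 1 < t x}"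
    proof
      assume "t \<in> (\<Union>I \<in> ?S. ones_exactly d I)"
      then obtain I where "I \<inter> K = {}" "t \<in> ones_exactly d I"
        by blast
      with K show "t \<in> {t. \<forall>x \<in> K. 1 < t x}"
        unfolding ones_exactly_def by blast
    next
      assume beyond: "t \<in> {t. \<forall>x \<in> K. 1 < t x}"
      let ?I = "{i \<in> {1..d}. t i = 1}"
      have "?I \<in> ?S"
        using beyond by auto
      moreover have "t \<in> ones_exactly d ?I"
        using pos unfolding ones_exactly_def by (auto simp: le_neq_implies_less)
      ultimately show "t \<in> (\<Union>I \<in> ?S. ones_exactly d I)"
        by blast
    qed
  qed
  finally show ?thesis ..
qed

lemma surv_one_singleton_less_1:
  assumes lmp: "local_lmp d P" and supp: "set_pmf P \<subseteq> pos_vectors d" and k: "k \<in> {1..d}"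
  shows "surv_one P {k} < 1"
proof (rule ccontr)
  assume "\<not> surv_one P {k} < 1"
  then have surv_1: "surv_one P {k} = 1"
    by (simp add: surv_one_def measure_pmf.prob_le_1 antisym)
  obtain t0 where t0: "t0 \<in> set_pmf P"
    using set_pmf_not_empty[of P] by blast
  let ?c = "\<lambda>x. if x = k then t0 k else 0"
  let ?beyond = "{t. \<forall>x \<in> {1..d}. ?c x < t x}"
  have "measure_pmf.prob P ?beyond = (\<Prod>r<t0 k. surv_one P {x \<in> {1..d}. r < ?c x})"
    by (rule prob_orthant_eq_prod_surv_one[OF lmp supp]) auto
  also have "\<dots> = 1"
    using k surv_1 by (simp add: conj_commute)
  finally have "measure_pmf.prob P ?beyond = 1" .
  then have "t0 \<in> ?beyond"
    using t0 by (simp add: measure_pmf.prob_eq_1 AE_measure_pmf_iff)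
  then show False
    using k by (auto dest!: bspec[of _ _ k])
qed

lemma local_lmp_wsg_admissible:
  assumes lmp: "local_lmp d P" and supp: "set_pmf P \<subseteq> pos_vectors d"
  shows "wsg_admissible d (\<lambda>I. measure_pmf.prob P (ones_exactly d I))"
  unfolding wsg_admissible_def
proof (intro conjI ballI)
  have "(\<Sum>I \<in> Pow {1..d}. measure_pmf.prob P (ones_exactly d I)) = surv_one P {}"
    using surv_one_eq_miss_prob[OF supp, of "{}"] by (simp add: miss_prob_def Pow_def)
  then show "(\<Sum>I \<in> Pow {1..d}. measure_pmf.prob P (ones_exactly d I)) = 1"
    by (simp add: surv_one_def)
next
  fix k assume k: "k \<in> {1..d}"
  have "(\<Sum>I \<in> {I \<in> Pow {1..d}. k \<notin> I}. measure_pmf.prob P (ones_exactly d I)) = surv_one P {k}"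
    using surv_one_eq_miss_prob[OF supp, of "{k}"] k by (simp add: miss_prob_def Pow_def)
  then show "(\<Sum>I \<in> {I \<in> Pow {1..d}. k \<notin> I}. measure_pmf.prob P (ones_exactly d I)) < 1"
    using surv_one_singleton_less_1[OF lmp supp k] by simp
qed auto

definition pinned_orthant :: "nat set \<Rightarrow> nat set \<Rightarrow> (nat \<Rightarrow> nat) \<Rightarrow> (nat \<Rightarrow> nat) set" where
  "pinned_orthant D A c = {t. (\<forall>x \<in> A. t x = c x) \<and> (\<forall>x \<in> D - A. c x < t x)}"

lemma pinned_orthant_split:
  assumes "a \<in> D" "a \<notin> A" "1 \<le> c a"
  shows "pinned_orthant D A (c(a := c a - 1)) = pinned_orthant D (insert a A) c \<union> pinned_orthant D A c"
proof -
  have D_A: "D - A = insert a (D - insert a A)"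
    using assms by auto
  have "c a - 1 < t a \<longleftrightarrow> t a = c a \<or> c a < t a" for t
    using assms(3) by arith
  then show ?thesis
    using assms(2) unfolding pinned_orthant_def D_A by auto
qed

lemma pinned_orthant_disjoint:
  assumes "a \<in> D" "a \<notin> A"
  shows "pinned_orthant D (insert a A) c \<inter> pinned_orthant D A c = {}"
proof (rule equals0I)
  fix t assume "t \<in> pinned_orthant D (insert a A) c \<inter> pinned_orthant D A c"
  then have "t a = c a" "c a < t a"
    using assms unfolding pinned_orthant_def by (auto dest!: bspec[of "D - A" _ a])
  then show False
    by simp
qed

lemma measure_pinned_orthant_eq:
  fixes M N :: "(nat \<Rightarrow> nat) measure"
  assumes M: "finite_measure M" "sets M = UNIV" and N: "finite_measure N" "sets N = UNIV"
    and orthants: "\<And>c. measure M {t. \<forall>x \<in> D. c x < t x} = measure N {t. \<forall>x \<in> D. c x < t x}"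
    and A: "finite A" "A \<subseteq> D" and c: "\<forall>x \<in> A. 1 \<le> c x"
  shows "measure M (pinned_orthant D A c) = measure N (pinned_orthant D A c)"
  using A c
proof (induction A arbitrary: c rule: finite_induct)
  case empty
  then show ?case
    using orthants by (simp add: pinned_orthant_def)
next
  case (insert a A)
  let ?c' = "c(a := c a - 1)"
  have a: "a \<in> D" "a \<notin> A" "1 \<le> c a"
    using insert by auto
  have split: "measure L (pinned_orthant D (insert a A) c)
      = measure L (pinned_orthant D A ?c') - measure L (pinned_orthant D A c)"
    if "finite_measure L" "sets L = UNIV" for L :: "(nat \<Rightarrow> nat) measure"
  proof -
    interpret finite_measure L
      by (rule that(1))
    have "measure L (pinned_orthant D A ?c')
        = measure L (pinned_orthant D (insert a A) c) + measure L (pinned_orthant D A c)"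
      unfolding pinned_orthant_split[of a D A c, OF a]
      by (rule finite_measure_Union) (use that(2) pinned_orthant_disjoint[OF a(1,2)] in auto)
    then show ?thesis
      by simp
  qed
  have "measure M (pinned_orthant D A ?c') = measure N (pinned_orthant D A ?c')"
    using insert.prems a(2) by (intro insert.IH) auto
  moreover have "measure M (pinned_orthant D A c) = measure N (pinned_orthant D A c)"
    using insert.prems by (intro insert.IH) auto
  ultimately show ?case
    using split[OF M] split[OF N] by simp
qed

lemma measure_eq_if_orthants_eq:
  fixes M N :: "(nat \<Rightarrow> nat) measure"
  assumes M: "finite_measure M" "sets M = UNIV" and N: "finite_measure N" "sets N = UNIV"
    and AE: "AE t in M. t \<in> pos_vectors d" "AE t in N. t \<in> pos_vectors d"
    and orthants: "\<And>c. measure M {t. \<forall>x \<in> {1..d}. c x < t x} = measure N {t. \<forall>x \<in> {1..d}. c x < t x}"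
  shows "M = N"
proof (rule measure_eqI_countable_AE[OF M(2) N(2) AE])
  show "countable (pos_vectors d)"
    by (rule countable_subset[OF _ countable_nat_vectors]) (auto simp: pos_vectors_def)
next
  fix t assume t: "t \<in> pos_vectors d"
  have point: "measure L {t} = measure L (pinned_orthant {1..d} {1..d} t)"
    if "AE s in L. s \<in> pos_vectors d" "sets L = UNIV" for L :: "(nat \<Rightarrow> nat) measure"
  proof (rule measure_eq_AE)
    show "AE s in L. s \<in> {t} \<longleftrightarrow> s \<in> pinned_orthant {1..d} {1..d} t"
      using that(1) by eventually_elim
        (use t in \<open>auto simp: pinned_orthant_def pos_vectors_def nat_vectors_def fun_eq_iff\<close>)
  qed (simp_all add: that(2))
  have "measure M (pinned_orthant {1..d} {1..d} t) = measure N (pinned_orthant {1..d} {1..d} t)"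
    using t by (intro measure_pinned_orthant_eq[OF M N orthants]) (auto simp: pos_vectors_def)
  then have "measure M {t} = measure N {t}"
    using point[OF AE(1) M(2)] point[OF AE(2) N(2)] by simp
  then show "emeasure M {t} = emeasure N {t}"
    using M(1) N(1) by (simp add: finite_measure.emeasure_eq_measure)
qed

lemma local_lmp_eq_wsg_law:
  assumes lmp: "local_lmp d P" and supp: "set_pmf P \<subseteq> pos_vectors d"
  shows "measure_pmf P = wsg_law d (\<lambda>I. measure_pmf.prob P (ones_exactly d I))"
proof -
  let ?p = "\<lambda>I. measure_pmf.prob P (ones_exactly d I)"
  have adm: "wsg_admissible d ?p"
    by (rule local_lmp_wsg_admissible[OF lmp supp])
  interpret Q: prob_space "wsg_law d ?p"
    by (rule prob_space_wsg_law)
  show ?thesis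
  proof (rule measure_eq_if_orthants_eq)
    show "AE t in measure_pmf P. t \<in> pos_vectors d"
      using supp by (auto intro: AE_pmfI)
    show "AE t in wsg_law d ?p. t \<in> pos_vectors d"
      by (rule AE_wsg_law_pos_vectors[OF adm])
  next
    fix c :: "nat \<Rightarrow> nat"
    let ?N = "\<Sum>x \<in> {1..d}. c x"
    have c_le: "\<forall>x \<in> {1..d}. c x \<le> ?N"
      by (auto intro: member_le_sum)
    have "measure_pmf.prob P {t. \<forall>x \<in> {1..d}. c x < t x} = (\<Prod>r<?N. surv_one P {x \<in> {1..d}. r < c x})"
      by (rule prob_orthant_eq_prod_surv_one[OF lmp supp c_le])
    also have "\<dots> = (\<Prod>r<?N. miss_prob d ?p {x \<in> {1..d}. r < c x})"
      by (intro prod.cong refl surv_one_eq_miss_prob[OF supp]) auto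
    also have "\<dots> = measure (wsg_law d ?p) {t. \<forall>x \<in> {1..d}. c x < t x}"
      using wsg_law_survival[OF adm _ c_le, of "\<lambda>x. x"] by simp
    finally show "measure_pmf.prob P {t. \<forall>x \<in> {1..d}. c x < t x}
        = measure (wsg_law d ?p) {t. \<forall>x \<in> {1..d}. c x < t x}" .
  qed (simp_all add: measure_pmf.finite_measure_axioms Q.finite_measure_axioms)
qed

theorem theorem2p2:
  fixes d :: nat and P :: "(nat \<Rightarrow> nat) pmf"
  assumes "d \<ge> 1"
    and "\<forall>t \<in> set_pmf P. (\<forall>i \<in> {1..d}. t i \<ge> 1) \<and> (\<forall>i. i \<notin> {1..d} \<longrightarrow> t i = 0)"
  shows "(local_lmp d P \<longleftrightarrow>
            (\<exists>p. wsg_admissible d p \<and> measure_pmf P = wsg_law d p))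
       \<and> (local_lmp d P \<longrightarrow>
            (let p = (\<lambda>I. measure_pmf.prob P
                        {t. (\<forall>i \<in> {1..d} - I. t i > 1) \<and> (\<forall>i \<in> I. t i = 1)})
             in wsg_admissible d p \<and> measure_pmf P = wsg_law d p))"
proof -
  have supp: "set_pmf P \<subseteq> pos_vectors d"
    using assms(2) by (auto simp: pos_vectors_def nat_vectors_def)
  have explicit: "local_lmp d P \<longrightarrow>
      (let p = (\<lambda>I. measure_pmf.prob P (ones_exactly d I))
       in wsg_admissible d p \<and> measure_pmf P = wsg_law d p)"
    using local_lmp_wsg_admissible[OF _ supp] local_lmp_eq_wsg_law[OF _ supp] by simp
  moreover have "local_lmp d P \<longleftrightarrow> (\<exists>p. wsg_admissible d p \<and> measure_pmf P = wsg_law d p)"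
    using explicit local_lmp_wsg_law unfolding Let_def by blast
  ultimately show ?thesis
    unfolding ones_exactly_def by blast
qed

end
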